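(* Let $\mathcal{G}_R(\mathcal{N}_R,\mathcal{E}_R)$ be an R-graph with ingress points $\mathcal{M}$ and parent-selection probabilities $p_{ij}$, and for $\mathcal{X}\subseteq\mathcal{N}_R$ let $$F(\mathcal{X})=E_P[\mathcal{NC}_R(\mathcal{X})]=\sum_{x\in\mathcal{M}^{|\mathcal{X}|}}\mathcal{NC}_R(\mathcal{X}\rhd x)\,P(\mathcal{X}\rhd x)$$ (as defined in the context). Then the set function $F$ is (i) non-negative and monotone (non-decreasing), (ii) not submodular in general, and (iii) not supermodular in general (i.e., there exist R-graphs for which $F$ is not submodular, and R-graphs for which $F$ is not supermodular).
   Context: An R-graph is a directed acyclic graph $\mathcal{G}_R(\mathcal{N}_R,\mathcal{E}_R)$ rooted at a destination node $n_{dst}$; an edge $j\to i$ means $i$ may use the routing path learned from its parent $j$; $P_i$ denotes the parents of $i$. $n_{dst}$ has a finite set $\mathcal{M}$ of ingress points, each child of $n_{dst}$ attached to exactly one. Each node $i$ selects a parent $j\in P_i$ with probability $p_{ij}$ ($\sum_{j\in P_i}p_{ij}=1$) and routes its traffic through the same ingress point as the selected parent; we write $i\rhd m$ if $i$ routes through ingress point $m$. For a set $\mathcal{X}$ of (measured) nodes and a vector $x\in\mathcal{M}^{|\mathcal{X}|}$, $\mathcal{X}\rhd x$ denotes the event that each node of $\mathcal{X}$ routes through the corresponding entry of $x$, and $P(\mathcal{X}\rhd x)$ is its probability. $\mathcal{NC}_R(\mathcal{X}\rhd x)=|\{i\in\mathcal{N}_R: f(i)\neq 0\mid \mathcal{X}\rhd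 x\}|$ is the number of nodes whose route is inferred with certainty (their route is determined, i.e., has probability $1$ for some ingress point) given the oracle $\mathcal{X}\rhd x$. A set function $F$ is submodular if $F(A\cup\{\epsilon\})-F(A)\ge F(B\cup\{\epsilon\})-F(B)$ for all $A\subseteq B$ and $\epsilon\notin B$, and supermodular if the reverse inequality always holds. *)

theory Defs
  imports Complex_Main "HOL-Library.FuncSet"
begin

text \<open>An R-graph: routing nodes N (the destination dst is not in N), parent sets P i
  (an edge j -> i for every j in P i), ingress point ing i of each child i of dst,
  finite ingress set M, and parent selection probabilities p i j.\<close>

definition rgraph ::
  "'a set \<Rightarrow> 'a \<Rightarrow> ('a \<Rightarrow> 'a set) \<Rightarrow> 'm set \<Rightarrow> ('a \<Rightarrow> 'm) \<Rightarrow> ('a \<Rightarrow> 'a \<Rightarrow> real) \<Rightarrow> bool"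
where
  "rgraph N dst P M ing p \<longleftrightarrow>
     finite N \<and> dst \<notin> N \<and> finite M \<and>
     (\<forall>i\<in>N. P i \<noteq> {} \<and> P i \<subseteq> insert dst N) \<and>
     acyclic {(j, i). i \<in> N \<and> j \<in> P i} \<and>
     (\<forall>i\<in>N. dst \<in> P i \<longrightarrow> ing i \<in> M) \<and>
     (\<forall>i\<in>N. (\<forall>j\<in>P i. p i j > 0) \<and> (\<Sum>j\<in>P i. p i j) = 1)"

text \<open>Outcomes of the random parent selection: s i is the parent selected by node i.\<close>
definition selections :: "'a set \<Rightarrow> ('a \<Rightarrow> 'a set) \<Rightarrow> ('a \<Rightarrow> 'a) set" where
  "selections N P = PiE N P"

definition weight :: "'a set \<Rightarrow> ('a \<Rightarrow> 'a \<Rightarrow> real) \<Rightarrow> ('a \<Rightarrow> 'a) \<Rightarrow> real" where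
  "weight N p s = (\<Prod>i\<in>N. p i (s i))"

inductive routes :: "'a \<Rightarrow> ('a \<Rightarrow> 'm) \<Rightarrow> ('a \<Rightarrow> 'a) \<Rightarrow> 'a \<Rightarrow> 'm \<Rightarrow> bool"
  for dst ing s where
  direct: "s i = dst \<Longrightarrow> routes dst ing s i (ing i)"
| via: "s i = j \<Longrightarrow> j \<noteq> dst \<Longrightarrow> routes dst ing s j m \<Longrightarrow> routes dst ing s i m"

definition prob_ev ::
  "'a set \<Rightarrow> ('a \<Rightarrow> 'a set) \<Rightarrow> ('a \<Rightarrow> 'a \<Rightarrow> real) \<Rightarrow> (('a \<Rightarrow> 'a) \<Rightarrow> bool) \<Rightarrow> real" where
  "prob_ev N P p E = (\<Sum>s\<in>{s\<in>selections N P. E s}. weight N p s)"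

definition routes_as :: "'a \<Rightarrow> ('a \<Rightarrow> 'm) \<Rightarrow> 'a set \<Rightarrow> ('a \<Rightarrow> 'm) \<Rightarrow> ('a \<Rightarrow> 'a) \<Rightarrow> bool" where
  "routes_as dst ing X x s \<longleftrightarrow> (\<forall>i\<in>X. routes dst ing s i (x i))"

text \<open>Number of nodes whose route is determined (probability 1 for some ingress point)
  given the oracle X |> x; conditional probability P(A and B)/P(B).\<close>
definition NC ::
  "'a set \<Rightarrow> 'a \<Rightarrow> ('a \<Rightarrow> 'a set) \<Rightarrow> ('a \<Rightarrow> 'm) \<Rightarrow> ('a \<Rightarrow> 'a \<Rightarrow> real) \<Rightarrow> 'a set \<Rightarrow> ('a \<Rightarrow> 'm) \<Rightarrow> nat"
where
  "NC N dst P ing p X x = card {i\<in>N. \<exists>m.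
      prob_ev N P p (\<lambda>s. routes dst ing s i m \<and> routes_as dst ing X x s)
        / prob_ev N P p (routes_as dst ing X x) = 1}"

definition F ::
  "'a set \<Rightarrow> 'a \<Rightarrow> ('a \<Rightarrow> 'a set) \<Rightarrow> 'm set \<Rightarrow> ('a \<Rightarrow> 'm) \<Rightarrow> ('a \<Rightarrow> 'a \<Rightarrow> real) \<Rightarrow> 'a set \<Rightarrow> real"
where
  "F N dst P M ing p X =
     (\<Sum>x\<in>PiE X (\<lambda>_. M). real (NC N dst P ing p X x) * prob_ev N P p (routes_as dst ing X x))"

end

theory Submission
  imports Defs
begin

(* Acyclicity makes every selection s of parents send each node i to a unique ingress point
   route s i. As all selection probabilities are positive, the route of i is certain given the
   oracle X |> x exactly when it is the same on every selection consistent with the oracle.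
   Since the oracle is itself a function of s, averaging over oracles is averaging over
   selections: F X is the expected size of the set of nodes whose route agrees on all selections
   that agree with s on X. That set grows with X, whence monotonicity. Sub- and supermodularity
   fail on two small R-graphs on which F is evaluated exhaustively. *)

definition route :: "'a \<Rightarrow> ('a \<Rightarrow> 'm) \<Rightarrow> ('a \<Rightarrow> 'a) \<Rightarrow> 'a \<Rightarrow> 'm" where
  "route dst ing s i = (THE m. routes dst ing s i m)"

lemma routes_unfold:
  "routes dst ing s i m \<longleftrightarrow> (if s i = dst then m = ing i else routes dst ing s (s i) m)"
  by (subst routes.simps) auto

lemma routes_unique:
  assumes "routes dst ing s i m" and "routes dst ing s i m'"
  shows "m = m'"
  using assms
proof (induction arbitrary: m' rule: routes.induct)
  case (direct i)
  then show ?case by (simp add: routes_unfold[of dst ing s i m'])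
next
  case (via i j m)
  then show ?case by (simp add: routes_unfold[of dst ing s i m'])
qed

lemma route_unfold: "route dst ing s i = (if s i = dst then ing i else route dst ing s (s i))"
proof -
  have "routes dst ing s i = (\<lambda>m. if s i = dst then m = ing i else routes dst ing s (s i) m)"
    by (rule ext, rule routes_unfold)
  then show ?thesis unfolding route_def by simp
qed

lemma finite_parent_relation:
  assumes "rgraph N dst P M ing p"
  shows "finite {(j, i). i \<in> N \<and> j \<in> P i}"
proof (rule finite_subset)
  show "{(j, i). i \<in> N \<and> j \<in> P i} \<subseteq> insert dst N \<times> N"
    using assms unfolding rgraph_def by auto
  show "finite (insert dst N \<times> N)"
    using assms unfolding rgraph_def by simp
qed

lemma routes_exists:
  assumes rg: "rgraph N dst P M ing p" and s: "s \<in> selections N P" and "i \<in> N"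
  shows "\<exists>m\<in>M. routes dst ing s i m"
proof -
  have "wf {(j, i). i \<in> N \<and> j \<in> P i}"
    using finite_acyclic_wf[OF finite_parent_relation[OF rg]] rg unfolding rgraph_def by simp
  then show ?thesis
    using \<open>i \<in> N\<close>
  proof (induction i rule: wf_induct_rule)
    case (less i)
    have si: "s i \<in> P i"
      using s less.prems unfolding selections_def by auto
    show ?case
    proof (cases "s i = dst")
      case True
      then have "ing i \<in> M"
        using rg si less.prems unfolding rgraph_def by auto
      with True show ?thesis by (auto intro: routes.direct)
    next
      case False
      then have "s i \<in> N"
        using rg si less.prems unfolding rgraph_def by auto
      with si less obtain m where "m \<in> M" "routes dst ing s (s i) m" by blast
      with False show ?thesis by (auto intro: routes.via)
    qed
  qed
qed

lemma
  assumes "rgraph N dst P M ing p" and "s \<in> selections N P" and "i \<in> N"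
  shows routes_iff_route: "routes dst ing s i m \<longleftrightarrow> m = route dst ing s i"
    and route_in_ingress: "route dst ing s i \<in> M"
proof -
  obtain m0 where m0: "m0 \<in> M" "routes dst ing s i m0"
    using routes_exists[OF assms] by blast
  have "route dst ing s i = m0"
    unfolding route_def using m0(2) by (rule the_equality) (rule routes_unique[OF _ m0(2)])
  with m0 show "routes dst ing s i m \<longleftrightarrow> m = route dst ing s i" "route dst ing s i \<in> M"
    using routes_unique[OF _ m0(2), of m] by auto
qed

lemma routes_as_iff:
  assumes "rgraph N dst P M ing p" and "X \<subseteq> N" and "s \<in> selections N P"
  shows "routes_as dst ing X x s \<longleftrightarrow> (\<forall>k\<in>X. x k = route dst ing s k)"
  unfolding routes_as_def using routes_iff_route[OF assms(1,3)] assms(2) by auto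

lemma finite_selections:
  assumes "rgraph N dst P M ing p"
  shows "finite (selections N P)"
  unfolding selections_def
proof (rule finite_PiE)
  show "finite N" using assms unfolding rgraph_def by simp
  fix i assume "i \<in> N"
  then have "P i \<subseteq> insert dst N" using assms unfolding rgraph_def by auto
  then show "finite (P i)" using assms unfolding rgraph_def by (auto intro: finite_subset)
qed

lemma weight_pos:
  assumes "rgraph N dst P M ing p" and "s \<in> selections N P"
  shows "0 < weight N p s"
  unfolding weight_def
proof (rule prod_pos)
  fix i assume "i \<in> N"
  moreover have "s i \<in> P i" using assms(2) \<open>i \<in> N\<close> unfolding selections_def by auto
  ultimately show "0 < p i (s i)" using assms(1) unfolding rgraph_def by auto
qed

lemma prob_ev_split:
  assumes "finite (selections N P)"
  shows "prob_ev N P p E = prob_ev N P p (\<lambda>s. A s \<and> E s) + prob_ev N P p (\<lambda>s. E s \<and> \<not> A s)"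
proof -
  have "{s \<in> selections N P. E s} =
      {s \<in> selections N P. A s \<and> E s} \<union> {s \<in> selections N P. E s \<and> \<not> A s}"
    by auto
  then show ?thesis
    unfolding prob_ev_def using assms by (simp add: sum.union_disjoint disjoint_iff)
qed

lemma prob_ev_eq_0_iff:
  assumes "finite (selections N P)" and "\<And>s. s \<in> selections N P \<Longrightarrow> 0 < weight N p s"
  shows "prob_ev N P p E = 0 \<longleftrightarrow> (\<forall>s\<in>selections N P. \<not> E s)"
proof -
  have "prob_ev N P p E = 0 \<longleftrightarrow> (\<forall>s\<in>{s \<in> selections N P. E s}. weight N p s = 0)"
    unfolding prob_ev_def using assms by (intro sum_nonneg_eq_0_iff) (auto simp: less_imp_le)
  also have "\<dots> \<longleftrightarrow> (\<forall>s\<in>selections N P. \<not> E s)"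
    using assms(2) by (auto simp: less_le)
  finally show ?thesis .
qed

lemma prob_ev_cond_eq_1_iff:
  assumes "finite (selections N P)" and "\<And>s. s \<in> selections N P \<Longrightarrow> 0 < weight N p s"
  shows "prob_ev N P p (\<lambda>s. A s \<and> E s) / prob_ev N P p E = 1 \<longleftrightarrow>
    (\<exists>s\<in>selections N P. E s) \<and> (\<forall>s\<in>selections N P. E s \<longrightarrow> A s)"
proof -
  have "prob_ev N P p (\<lambda>s. A s \<and> E s) / prob_ev N P p E = 1 \<longleftrightarrow>
      prob_ev N P p E \<noteq> 0 \<and> prob_ev N P p (\<lambda>s. E s \<and> \<not> A s) = 0"
    using prob_ev_split[OF assms(1), of p E A] by auto
  then show ?thesis
    by (auto simp: prob_ev_eq_0_iff[OF assms])
qed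

definition determined ::
  "'a set \<Rightarrow> 'a \<Rightarrow> ('a \<Rightarrow> 'a set) \<Rightarrow> ('a \<Rightarrow> 'm) \<Rightarrow> 'a set \<Rightarrow> ('a \<Rightarrow> 'a) \<Rightarrow> 'a set"
where
  "determined N dst P ing X s = {i \<in> N. \<forall>s'\<in>selections N P.
     (\<forall>k\<in>X. route dst ing s' k = route dst ing s k) \<longrightarrow> route dst ing s' i = route dst ing s i}"

lemma determined_mono: "X \<subseteq> Y \<Longrightarrow> determined N dst P ing X s \<subseteq> determined N dst P ing Y s"
  unfolding determined_def by blast

lemma NC_observed:
  assumes rg: "rgraph N dst P M ing p" and X: "X \<subseteq> N" and s: "s \<in> selections N P"
  shows "NC N dst P ing p X (restrict (route dst ing s) X) = card (determined N dst P ing X s)"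
proof -
  let ?S = "selections N P"
  let ?x = "restrict (route dst ing s) X"
  let ?agree = "\<lambda>s'. \<forall>k\<in>X. route dst ing s' k = route dst ing s k"
  have observed: "routes_as dst ing X ?x s' \<longleftrightarrow> ?agree s'" if "s' \<in> ?S" for s'
    using routes_as_iff[OF rg X that] by auto
  have "(\<exists>m. prob_ev N P p (\<lambda>s'. routes dst ing s' i m \<and> routes_as dst ing X ?x s')
        / prob_ev N P p (routes_as dst ing X ?x) = 1) \<longleftrightarrow>
      (\<forall>s'\<in>?S. ?agree s' \<longrightarrow> route dst ing s' i = route dst ing s i)"
    if "i \<in> N" for i
  proof -
    have "(\<exists>m. prob_ev N P p (\<lambda>s'. routes dst ing s' i m \<and> routes_as dst ing X ?x s')
        / prob_ev N P p (routes_as dst ing X ?x) = 1) \<longleftrightarrow>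
      (\<exists>m. (\<exists>s'\<in>?S. ?agree s') \<and> (\<forall>s'\<in>?S. ?agree s' \<longrightarrow> route dst ing s' i = m))"
      by (subst prob_ev_cond_eq_1_iff[OF finite_selections[OF rg] weight_pos[OF rg]])
        (use observed routes_iff_route[OF rg _ that] in auto)
    also have "\<dots> \<longleftrightarrow> (\<forall>s'\<in>?S. ?agree s' \<longrightarrow> route dst ing s' i = route dst ing s i)"
      using s by blast
    finally show ?thesis .
  qed
  then show ?thesis
    unfolding NC_def determined_def by (intro arg_cong[where f = card] Collect_cong) blast
qed

lemma F_eq_expected_card_determined:
  assumes rg: "rgraph N dst P M ing p" and X: "X \<subseteq> N"
  shows "F N dst P M ing p X =
    (\<Sum>s\<in>selections N P. weight N p s * card (determined N dst P ing X s))"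
proof -
  let ?S = "selections N P"
  let ?w = "weight N p"
  let ?PX = "PiE X (\<lambda>_. M)"
  let ?nc = "\<lambda>x. real (NC N dst P ing p X x)"
  have "finite ?PX"
    using rg X unfolding rgraph_def by (intro finite_PiE) (auto intro: finite_subset)
  have observed: "routes_as dst ing X x s \<longleftrightarrow> x = restrict (route dst ing s) X"
    if "s \<in> ?S" and "x \<in> ?PX" for s x
    using routes_as_iff[OF rg X that(1)] that(2) by (auto simp: PiE_def extensional_def fun_eq_iff)
  have observation_in: "restrict (route dst ing s) X \<in> ?PX" if "s \<in> ?S" for s
    using route_in_ingress[OF rg that] X by auto
  have "F N dst P M ing p X =
      (\<Sum>x\<in>?PX. \<Sum>s\<in>?S. if routes_as dst ing X x s then ?nc x * ?w s else 0)"
    unfolding F_def prob_ev_def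
    by (simp add: sum_distrib_left sum.inter_filter[OF finite_selections[OF rg]])
      (intro sum.cong refl, simp)
  also have "\<dots> = (\<Sum>s\<in>?S. \<Sum>x\<in>?PX. if routes_as dst ing X x s then ?nc x * ?w s else 0)"
    by (rule sum.swap)
  also have "\<dots> = (\<Sum>s\<in>?S. \<Sum>x\<in>?PX. if x = restrict (route dst ing s) X then ?nc x * ?w s else 0)"
    by (intro sum.cong refl) (simp add: observed)
  also have "\<dots> = (\<Sum>s\<in>?S. ?nc (restrict (route dst ing s) X) * ?w s)"
    using \<open>finite ?PX\<close> observation_in by (intro sum.cong refl) simp
  also have "\<dots> = (\<Sum>s\<in>?S. ?w s * card (determined N dst P ing X s))"
    by (intro sum.cong refl) (simp add: NC_observed[OF rg X])
  finally show ?thesis .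
qed

lemma F_nonneg:
  assumes "rgraph N dst P M ing p" and "X \<subseteq> N"
  shows "0 \<le> F N dst P M ing p X"
  unfolding F_eq_expected_card_determined[OF assms]
  using weight_pos[OF assms(1)] by (intro sum_nonneg) (simp add: less_imp_le)

lemma F_mono:
  assumes rg: "rgraph N dst P M ing p" and "X \<subseteq> Y" and "Y \<subseteq> N"
  shows "F N dst P M ing p X \<le> F N dst P M ing p Y"
  unfolding F_eq_expected_card_determined[OF rg order_trans[OF assms(2,3)]]
    F_eq_expected_card_determined[OF rg assms(3)]
proof (rule sum_mono)
  fix s assume s: "s \<in> selections N P"
  have "finite (determined N dst P ing Y s)"
    using rg unfolding rgraph_def determined_def by simp
  then have "card (determined N dst P ing X s) \<le> card (determined N dst P ing Y s)"
    using determined_mono[OF assms(2)] by (rule card_mono)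
  then show "weight N p s * card (determined N dst P ing X s)
      \<le> weight N p s * card (determined N dst P ing Y s)"
    using weight_pos[OF rg s] by simp
qed

lemma sum_PiE_insert:
  assumes "a \<notin> A"
  shows "sum g (PiE (insert a A) B) = (\<Sum>y\<in>B a. \<Sum>s\<in>PiE A B. g (s(a := y)))"
  unfolding PiE_insert_eq
  by (subst sum.reindex[OF inj_combinator[OF assms]]) (simp add: sum.cartesian_product split_def)

lemma Ball_PiE_insert:
  "(\<forall>s\<in>PiE (insert a A) B. Q s) \<longleftrightarrow> (\<forall>y\<in>B a. \<forall>s\<in>PiE A B. Q (s(a := y)))"
  unfolding PiE_insert_eq by auto

lemma acyclic_if_parents_less:
  assumes "\<And>i j. i \<in> N \<Longrightarrow> j \<in> P i \<Longrightarrow> j < (i :: nat)"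
  shows "acyclic {(j, i). i \<in> N \<and> j \<in> P i}"
  by (rule acyclic_subset[OF wf_acyclic[OF wf_less_than]]) (use assms in auto)

definition uniform_choice :: "('a \<Rightarrow> 'a set) \<Rightarrow> 'a \<Rightarrow> 'a \<Rightarrow> real" where
  "uniform_choice P i j = 1 / card (P i)"

definition two_ingress :: "nat \<Rightarrow> nat" where
  "two_ingress i = (if i = 2 then 2 else 1)"

(* Destination 0; node 3 picks 0 or 2, node 4 follows 3. Observing either of 3, 4 reveals the
   choice of 3, so once 4 is observed, observing 3 as well gains nothing. *)
definition chain_parents :: "nat \<Rightarrow> nat set" where
  "chain_parents i = (if i = 2 then {0} else if i = 3 then {0, 2} else {3})"

(* Nodes 3 and 4 independently pick 0 or 2, node 5 picks 3 or 4. Observing one of 3, 4 settles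
   only that node; observing both also settles 5 whenever they agree, i.e. with probability 1/2. *)
definition diamond_parents :: "nat \<Rightarrow> nat set" where
  "diamond_parents i = (if i = 2 then {0} else if i \<in> {3, 4} then {0, 2} else {3, 4})"

lemmas example_defs = two_ingress_def uniform_choice_def chain_parents_def diamond_parents_def

lemma rgraph_chain:
  "rgraph {2, 3, 4} 0 chain_parents {1, 2} two_ingress (uniform_choice chain_parents)"
proof -
  have "acyclic {(j, i). i \<in> {2, 3, 4} \<and> j \<in> chain_parents i}"
    by (rule acyclic_if_parents_less) (auto simp: chain_parents_def)
  then show ?thesis
    unfolding rgraph_def by (simp add: example_defs)
qed

lemma rgraph_diamond:
  "rgraph {2, 3, 4, 5} 0 diamond_parents {1, 2} two_ingress (uniform_choice diamond_parents)"
proof -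
  have "acyclic {(j, i). i \<in> {2, 3, 4, 5} \<and> j \<in> diamond_parents i}"
    by (rule acyclic_if_parents_less) (auto simp: diamond_parents_def)
  then show ?thesis
    unfolding rgraph_def by (simp add: example_defs)
qed

abbreviation F_chain :: "nat set \<Rightarrow> real" where
  "F_chain \<equiv> F {2, 3, 4} 0 chain_parents {1, 2} two_ingress (uniform_choice chain_parents)"

abbreviation F_diamond :: "nat set \<Rightarrow> real" where
  "F_diamond \<equiv> F {2, 3, 4, 5} 0 diamond_parents {1, 2} two_ingress (uniform_choice diamond_parents)"

(* route_unfold only at the concrete nodes: as a general simp rule it would loop. *)
lemmas F_evaluation = selections_def weight_def sum_PiE_insert Ball_PiE_insert
  route_unfold[where i = 2] route_unfold[where i = 3] route_unfold[where i = 4]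
  route_unfold[where i = 5]

lemma F_chain_values:
  "F_chain {} = 1" "F_chain {3} = 3" "F_chain {4} = 3" "F_chain {3, 4} = 3"
  by (subst F_eq_expected_card_determined[OF rgraph_chain], simp,
      simp only: determined_def real_of_card sum.inter_filter finite_insert finite.emptyI,
      simp add: F_evaluation example_defs del: sum_constant)+

lemma F_diamond_values:
  "F_diamond {} = 1" "F_diamond {3} = 2" "F_diamond {4} = 2" "F_diamond {3, 4} = 7 / 2"
  by (subst F_eq_expected_card_determined[OF rgraph_diamond], simp,
      simp only: determined_def real_of_card sum.inter_filter finite_insert finite.emptyI,
      simp add: F_evaluation example_defs del: sum_constant)+

lemma F_diamond_not_submodular:
  "\<exists>A B e. A \<subseteq> B \<and> B \<subseteq> {2, 3, 4, 5} \<and> e \<in> {2, 3, 4, 5} \<and> e \<notin> B \<and>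
    F_diamond (insert e A) - F_diamond A < F_diamond (insert e B) - F_diamond B"
  using F_diamond_values
  by (intro exI[of _ "{}"] exI[of _ "{3}"] exI[of _ 4]) (simp add: insert_commute)

lemma F_chain_not_supermodular:
  "\<exists>A B e. A \<subseteq> B \<and> B \<subseteq> {2, 3, 4} \<and> e \<in> {2, 3, 4} \<and> e \<notin> B \<and>
    F_chain (insert e A) - F_chain A > F_chain (insert e B) - F_chain B"
  using F_chain_values by (intro exI[of _ "{}"] exI[of _ "{4}"] exI[of _ 3]) simp

theorem lemma4p1:
  shows
   "(\<forall>(N :: 'a set) dst P (M :: 'm set) ing p. rgraph N dst P M ing p \<longrightarrow>
       (\<forall>X. X \<subseteq> N \<longrightarrow> 0 \<le> F N dst P M ing p X) \<and>
       (\<forall>X Y. X \<subseteq> Y \<and> Y \<subseteq> N \<longrightarrow> F N dst P M ing p X \<le> F N dst P M ing p Y))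
    \<and> (\<exists>(N :: nat set) dst P (M :: nat set) ing p. rgraph N dst P M ing p \<and>
       (\<exists>A B e. A \<subseteq> B \<and> B \<subseteq> N \<and> e \<in> N \<and> e \<notin> B \<and>
          F N dst P M ing p (insert e A) - F N dst P M ing p A
            < F N dst P M ing p (insert e B) - F N dst P M ing p B))
    \<and> (\<exists>(N :: nat set) dst P (M :: nat set) ing p. rgraph N dst P M ing p \<and>
       (\<exists>A B e. A \<subseteq> B \<and> B \<subseteq> N \<and> e \<in> N \<and> e \<notin> B \<and>
          F N dst P M ing p (insert e A) - F N dst P M ing p A
            > F N dst P M ing p (insert e B) - F N dst P M ing p B))"
  by (intro conjI)
    (meson F_nonneg F_mono, use rgraph_diamond F_diamond_not_submodular in blast,
      use rgraph_chain F_chain_not_supermodular in blast)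

end
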